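(* For all positive integers $l$ and $m$, the double subdivided star $T_{l,m}$ admits no perfect state transfer between any pair of distinct vertices.
   Context: A subdivided star $SK_{1,l}$ is obtained by identifying exactly one pendant (end) vertex from each of $l$ copies of the path $P_3$; the identified vertex is the coalescence vertex. The double subdivided star $T_{l,m}$ is obtained from $SK_{1,l}$ and $SK_{1,m}$ by adding one edge joining their two coalescence vertices. For a graph $G$ with adjacency matrix $A$, let $U(t)=\exp(itA)$ for $t\in\mathbb{R}$, and let $\mathbf{e}_a$ be the standard basis vector of vertex $a$. $G$ has perfect state transfer between distinct vertices $a,b$ if there is $\tau\in\mathbb{R}$ and $\gamma\in\mathbb{C}$ with $U(\tau)\mathbf{e}_a=\gamma\mathbf{e}_b$. *)

theory Defs
  imports Complex_Main "Jordan_Normal_Form.Matrix"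
begin

text \<open>Double subdivided star T(l,m) on vertex set {0..<2l+2m+2}:
  vertex 0 = coalescence vertex of SK(1,l), vertex 1 = coalescence vertex of SK(1,m);
  the i-th copy of P3 in SK(1,l) (i < l) is the path 0 - (2+2i) - (3+2i);
  the j-th copy of P3 in SK(1,m) (j < m) is the path 1 - (2+2l+2j) - (3+2l+2j);
  plus the edge 0 - 1 joining the two coalescence vertices.\<close>

definition dss_nverts :: "nat \<Rightarrow> nat \<Rightarrow> nat" where
  "dss_nverts l m = 2 * l + 2 * m + 2"

definition dss_arc :: "nat \<Rightarrow> nat \<Rightarrow> nat \<Rightarrow> nat \<Rightarrow> bool" where
  "dss_arc l m u v \<longleftrightarrow>
     (u = 0 \<and> v = 1)
   \<or> (\<exists>i<l. (u = 0 \<and> v = 2 + 2 * i) \<or> (u = 2 + 2 * i \<and> v = 3 + 2 * i))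
   \<or> (\<exists>j<m. (u = 1 \<and> v = 2 + 2 * l + 2 * j) \<or> (u = 2 + 2 * l + 2 * j \<and> v = 3 + 2 * l + 2 * j))"

definition dss_edge :: "nat \<Rightarrow> nat \<Rightarrow> nat \<Rightarrow> nat \<Rightarrow> bool" where
  "dss_edge l m u v \<longleftrightarrow> dss_arc l m u v \<or> dss_arc l m v u"

definition dss_adj :: "nat \<Rightarrow> nat \<Rightarrow> complex mat" where
  "dss_adj l m = mat (dss_nverts l m) (dss_nverts l m)
                     (\<lambda>(u, v). if dss_edge l m u v then 1 else 0)"

definition transition_mat :: "complex mat \<Rightarrow> real \<Rightarrow> complex mat" where
  "transition_mat A t = mat (dim_row A) (dim_col A)
     (\<lambda>(u, v). \<Sum>k. ((\<i> * complex_of_real t) ^ k / of_nat (fact k)) * (A ^\<^sub>m k) $$ (u, v))"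

definition has_pst :: "complex mat \<Rightarrow> nat \<Rightarrow> nat \<Rightarrow> bool" where
  "has_pst A a b \<longleftrightarrow> a < dim_row A \<and> b < dim_row A \<and> a \<noteq> b \<and>
     (\<exists>\<tau>::real. \<exists>\<gamma>::complex.
        transition_mat A \<tau> *\<^sub>v unit_vec (dim_row A) a = \<gamma> \<cdot>\<^sub>v unit_vec (dim_row A) b)"

end

theory Submission
  imports Defs
begin

text \<open>
  If \<open>U(\<tau>) e\<^sub>a = \<gamma> e\<^sub>b\<close> and \<open>v\<close> is a left eigenvector of \<open>A\<close> for \<open>\<theta>\<close>, pairing with \<open>v\<close>
  gives \<open>exp(i\<tau>\<theta>) v\<^sub>a = \<gamma> v\<^sub>b\<close>. Since \<open>T(l,m)\<close> is bipartite, \<open>-\<theta>\<close> is an eigenvalue too, with an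
  eigenvector that agrees with \<open>v\<close> up to the sign of each entry; if \<open>v\<^sub>a \<noteq> 0\<close>, comparing the two
  identities forces \<open>exp(4i\<tau>\<theta>) = 1\<close>. This applies to \<open>\<theta> = \<surd>u\<close> for each of the three positive roots
  \<open>u\<^sub>1 < 1 < u\<^sub>2 < 1 + l < u\<^sub>3\<close> of the cubic
  \<open>u(u - 1 - l)(u - 1 - m) - (u - 1)\<^sup>2\<close>, whose eigenvectors vanish nowhere, so
  \<open>u\<^sub>i = k\<^sub>i\<^sup>2 \<pi>\<^sup>2 / (4\<tau>\<^sup>2)\<close> with integers \<open>k\<^sub>i\<close> (and \<open>\<tau> \<noteq> 0\<close> because \<open>U(0) = I\<close>).
  By Vieta the roots sum to \<open>3 + l + m\<close>, so \<open>u\<^sub>1 = k\<^sub>1\<^sup>2 (3 + l + m) / (k\<^sub>1\<^sup>2 + k\<^sub>2\<^sup>2 + k\<^sub>3\<^sup>2)\<close> is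
  rational. But a rational root of this monic integer cubic is an integer, and \<open>0 < u\<^sub>1 < 1\<close>.
\<close>

lemma mat_pow_entry_norm_le:
  fixes A :: "'a::real_normed_algebra_1 mat"
  assumes A: "A \<in> carrier_mat n n"
    and bound: "\<And>i j. i < n \<Longrightarrow> j < n \<Longrightarrow> norm (A $$ (i,j)) \<le> c"
    and "i < n" "j < n"
  shows "norm ((A ^\<^sub>m k) $$ (i,j)) \<le> (real n * c) ^ k"
  using \<open>i < n\<close> \<open>j < n\<close>
proof (induction k arbitrary: i j)
  case 0
  then show ?case using A by auto
next
  case (Suc k)
  have c: "0 \<le> c" using bound[OF Suc.prems] norm_ge_zero order_trans by blast
  have "(A ^\<^sub>m Suc k) $$ (i,j) = (\<Sum>z<n. (A ^\<^sub>m k) $$ (i,z) * A $$ (z,j))"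
    using Suc.prems A by (simp add: scalar_prod_def atLeast0LessThan)
  also have "norm \<dots> \<le> (\<Sum>z<n. norm ((A ^\<^sub>m k) $$ (i,z)) * norm (A $$ (z,j)))"
    by (rule order_trans[OF norm_sum sum_mono[OF norm_mult_ineq]])
  also have "\<dots> \<le> (\<Sum>z<n. (real n * c) ^ k * c)"
    using Suc c bound by (intro sum_mono mult_mono) auto
  also have "\<dots> = (real n * c) ^ Suc k" by simp
  finally show ?case .
qed

lemma transition_mat_summable:
  fixes A :: "complex mat"
  assumes A: "A \<in> carrier_mat n n" and "i < n" "j < n"
  shows "summable (\<lambda>k. ((\<i> * complex_of_real t) ^ k / of_nat (fact k)) * (A ^\<^sub>m k) $$ (i, j))"
proof -
  define c where "c = (\<Sum>p\<in>{..<n} \<times> {..<n}. norm (A $$ p))"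
  have bound: "norm (A $$ (i',j')) \<le> c" if "i' < n" "j' < n" for i' j'
    unfolding c_def using that by (intro member_le_sum) auto
  have "summable (\<lambda>k. (\<bar>t\<bar> * (real n * c)) ^ k /\<^sub>R fact k)"
    using exp_converges sums_summable by blast
  moreover have "norm (((\<i> * complex_of_real t) ^ k / of_nat (fact k)) * (A ^\<^sub>m k) $$ (i, j))
      \<le> (\<bar>t\<bar> * (real n * c)) ^ k /\<^sub>R fact k" for k
  proof -
    have "norm (((\<i> * complex_of_real t) ^ k / of_nat (fact k)) * (A ^\<^sub>m k) $$ (i, j))
        = \<bar>t\<bar> ^ k / fact k * norm ((A ^\<^sub>m k) $$ (i, j))"
      by (simp add: norm_mult norm_divide norm_power)
    also have "\<dots> \<le> \<bar>t\<bar> ^ k / fact k * (real n * c) ^ k"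
      using mat_pow_entry_norm_le[OF A bound \<open>i < n\<close> \<open>j < n\<close>] by (intro mult_left_mono) auto
    also have "\<dots> = (\<bar>t\<bar> * (real n * c)) ^ k /\<^sub>R fact k"
      by (simp add: power_mult_distrib divide_inverse)
    finally show ?thesis .
  qed
  ultimately show ?thesis
    by (rule summable_comparison_test')
qed

lemma transition_mat_0:
  fixes A :: "complex mat"
  assumes A: "A \<in> carrier_mat n n"
  shows "transition_mat A 0 = 1\<^sub>m n"
proof (rule eq_matI)
  fix i j assume "i < dim_row (1\<^sub>m n :: complex mat)" "j < dim_col (1\<^sub>m n :: complex mat)"
  then have ij: "i < n" "j < n" by simp_all
  have "transition_mat A 0 $$ (i,j) = (\<Sum>k. (0 ^ k / of_nat (fact k)) * (A ^\<^sub>m k) $$ (i, j))"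
    using A ij unfolding transition_mat_def by auto
  also have "\<dots> = (\<Sum>k\<in>{0}. (0 ^ k / of_nat (fact k)) * (A ^\<^sub>m k) $$ (i, j))"
    by (rule suminf_finite) auto
  finally show "transition_mat A 0 $$ (i,j) = 1\<^sub>m n $$ (i,j)" using A ij by simp
qed (use A in \<open>simp_all add: transition_mat_def\<close>)

lemma has_pst_column:
  fixes A :: "complex mat"
  assumes pst: "has_pst A a b" and A: "A \<in> carrier_mat n n"
  obtains \<tau> \<gamma> where "\<tau> \<noteq> 0"
    and "\<And>w. w < n \<Longrightarrow> transition_mat A \<tau> $$ (w,a) = (if w = b then \<gamma> else 0)"
proof -
  obtain \<tau> \<gamma> where ab: "a < n" "b < n" "a \<noteq> b"
    and col: "transition_mat A \<tau> *\<^sub>v unit_vec n a = \<gamma> \<cdot>\<^sub>v unit_vec n b"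
    using pst A unfolding has_pst_def by auto
  have entry: "transition_mat A \<tau> $$ (w,a) = (if w = b then \<gamma> else 0)" if "w < n" for w
  proof -
    have "transition_mat A \<tau> $$ (w,a) = (transition_mat A \<tau> *\<^sub>v unit_vec n a) $ w"
      using A ab that by (simp add: transition_mat_def)
    then show ?thesis using col ab that by simp
  qed
  have "\<tau> \<noteq> 0"
    using entry[of a] ab by (auto simp: transition_mat_0[OF A])
  from this entry show thesis by (rule that)
qed

lemma left_eigenvector_mat_pow:
  fixes A :: "'a::comm_semiring_1 mat"
  assumes A: "A \<in> carrier_mat n n"
    and eig: "\<And>x. x < n \<Longrightarrow> (\<Sum>w<n. v w * A $$ (w,x)) = \<theta> * v x"
    and "x < n"
  shows "(\<Sum>w<n. v w * (A ^\<^sub>m k) $$ (w,x)) = \<theta> ^ k * v x"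
  using \<open>x < n\<close>
proof (induction k arbitrary: x)
  case 0
  have "(\<Sum>w<n. v w * (A ^\<^sub>m 0) $$ (w,x)) = (\<Sum>w<n. if w = x then v w else 0)"
    using A 0 by (intro sum.cong) auto
  then show ?case using 0 by simp
next
  case (Suc k)
  have "(\<Sum>w<n. v w * (A ^\<^sub>m Suc k) $$ (w,x)) = (\<Sum>w<n. \<Sum>z<n. v w * ((A ^\<^sub>m k) $$ (w,z) * A $$ (z,x)))"
    using A Suc.prems by (intro sum.cong) (auto simp: scalar_prod_def sum_distrib_left atLeast0LessThan)
  also have "\<dots> = (\<Sum>z<n. (\<Sum>w<n. v w * (A ^\<^sub>m k) $$ (w,z)) * A $$ (z,x))"
    by (subst sum.swap) (simp add: sum_distrib_right mult.assoc)
  also have "\<dots> = \<theta> ^ k * (\<Sum>z<n. v z * A $$ (z,x))"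
    using Suc.IH by (simp add: sum_distrib_left mult.assoc)
  finally show ?case using eig[OF Suc.prems] by (simp add: mult_ac)
qed

lemma transition_mat_left_eigenvector:
  fixes A :: "complex mat"
  assumes A: "A \<in> carrier_mat n n"
    and eig: "\<And>x. x < n \<Longrightarrow> (\<Sum>w<n. v w * A $$ (w,x)) = \<theta> * v x"
    and "x < n"
  shows "(\<Sum>w<n. v w * transition_mat A t $$ (w,x)) = exp (\<i> * complex_of_real t * \<theta>) * v x"
proof -
  let ?c = "\<lambda>k. (\<i> * complex_of_real t) ^ k / of_nat (fact k)"
  have "(\<lambda>k. \<Sum>w<n. v w * (?c k * (A ^\<^sub>m k) $$ (w, x))) sums (\<Sum>w<n. v w * transition_mat A t $$ (w,x))"
  proof (rule sums_sum)
    fix w assume "w \<in> {..<n}"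
    then have "w < n" by simp
    then have "(\<lambda>k. ?c k * (A ^\<^sub>m k) $$ (w, x)) sums transition_mat A t $$ (w,x)"
      using A \<open>x < n\<close> transition_mat_summable[OF A _ \<open>x < n\<close>, THEN summable_sums]
      unfolding transition_mat_def by auto
    then show "(\<lambda>k. v w * (?c k * (A ^\<^sub>m k) $$ (w, x))) sums (v w * transition_mat A t $$ (w,x))"
      by (rule sums_mult)
  qed
  moreover have "(\<Sum>w<n. v w * (?c k * (A ^\<^sub>m k) $$ (w, x))) = (\<i> * complex_of_real t * \<theta>) ^ k /\<^sub>R fact k * v x" for k
  proof -
    have "(\<Sum>w<n. v w * (?c k * (A ^\<^sub>m k) $$ (w, x))) = ?c k * (\<Sum>w<n. v w * (A ^\<^sub>m k) $$ (w, x))"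
      by (simp add: sum_distrib_left mult.left_commute)
    also have "\<dots> = ?c k * (\<theta> ^ k * v x)"
      using left_eigenvector_mat_pow[OF A eig \<open>x < n\<close>] by simp
    finally show ?thesis
      by (simp add: scaleR_conv_of_real power_mult_distrib divide_inverse mult_ac)
  qed
  moreover have "(\<lambda>k. (\<i> * complex_of_real t * \<theta>) ^ k /\<^sub>R fact k * v x) sums (exp (\<i> * complex_of_real t * \<theta>) * v x)"
    by (rule sums_mult2, rule exp_converges)
  ultimately show ?thesis using sums_unique2 by auto
qed

lemma pst_eigenvalue_pair_period:
  fixes A :: "complex mat" and \<theta> \<tau> :: real
  assumes A: "A \<in> carrier_mat n n" and "a < n" "b < n"
    and col: "\<And>w. w < n \<Longrightarrow> transition_mat A \<tau> $$ (w,a) = (if w = b then \<gamma> else 0)"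
    and v: "\<And>x. x < n \<Longrightarrow> (\<Sum>w<n. v w * A $$ (w,x)) = complex_of_real \<theta> * v x"
    and v': "\<And>x. x < n \<Longrightarrow> (\<Sum>w<n. v' w * A $$ (w,x)) = - complex_of_real \<theta> * v' x"
    and "v a \<noteq> 0" and sign_a: "v' a = v a \<or> v' a = - v a" and sign_b: "v' b = v b \<or> v' b = - v b"
  shows "\<exists>k::int. 4 * \<tau> * \<theta> = 2 * pi * of_int k"
proof -
  have transfer: "exp (\<i> * complex_of_real \<tau> * \<mu>) * u a = \<gamma> * u b"
    if "\<And>x. x < n \<Longrightarrow> (\<Sum>w<n. u w * A $$ (w,x)) = \<mu> * u x" for u \<mu>
  proof -
    have "(\<Sum>w<n. u w * transition_mat A \<tau> $$ (w,a)) = (\<Sum>w<n. if w = b then u w * \<gamma> else 0)"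
      using col by (intro sum.cong) auto
    then show ?thesis
      using transition_mat_left_eigenvector[OF A that \<open>a < n\<close>] \<open>b < n\<close> by (simp add: mult.commute)
  qed
  define E where "E = exp (\<i> * complex_of_real \<tau> * complex_of_real \<theta>)"
  have E: "E * v a = \<gamma> * v b"
    unfolding E_def by (rule transfer[OF v])
  have "exp (- (\<i> * complex_of_real \<tau> * complex_of_real \<theta>)) * v' a = \<gamma> * v' b"
    using transfer[OF v'] by simp
  then have E': "v' a = E * (\<gamma> * v' b)"
    unfolding E_def by (simp add: exp_minus field_simps)
  obtain \<sigma> \<rho> :: complex where "\<sigma>\<^sup>2 = 1" "\<rho>\<^sup>2 = 1" "v' a = \<sigma> * v a" "v' b = \<rho> * v b"
    using sign_a sign_b by (metis mult_1 mult_minus1 power2_minus power_one)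
  with E E' have "\<sigma> * v a = \<rho> * E\<^sup>2 * v a"
    by (simp add: power2_eq_square mult_ac)
  then have "\<sigma> = \<rho> * E\<^sup>2" using \<open>v a \<noteq> 0\<close> by simp
  then have "E ^ 4 = 1"
    using \<open>\<sigma>\<^sup>2 = 1\<close> \<open>\<rho>\<^sup>2 = 1\<close> by (metis mult_1 power_mult_distrib power_mult numeral_Bit0 numeral_One mult_2)
  moreover have "E ^ 4 = cis (4 * \<tau> * \<theta>)"
    unfolding E_def cis_conv_exp by (simp flip: exp_of_nat_mult add: mult_ac)
  ultimately have "cos (4 * \<tau> * \<theta>) = 1"
    by (metis cis.sel(1) one_complex.sel(1))
  then show ?thesis
    unfolding cos_one_2pi_int by (auto simp: mult_ac)
qed

lemma dss_adj_carrier: "dss_adj l m \<in> carrier_mat (dss_nverts l m) (dss_nverts l m)"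
  unfolding dss_adj_def by auto

lemma dss_neighbours_0:
  "{w \<in> {..<dss_nverts l m}. dss_edge l m w 0} = insert 1 ((\<lambda>i. 2 + 2*i) ` {..<l})"
  unfolding dss_nverts_def dss_edge_def dss_arc_def by auto

lemma dss_neighbours_1:
  "{w \<in> {..<dss_nverts l m}. dss_edge l m w 1} = insert 0 ((\<lambda>j. 2 + 2*l + 2*j) ` {..<m})"
  unfolding dss_nverts_def dss_edge_def dss_arc_def by auto

lemma dss_neighbours_left_middle:
  "i < l \<Longrightarrow> {w \<in> {..<dss_nverts l m}. dss_edge l m w (2 + 2*i)} = {0, 3 + 2*i}"
  unfolding dss_nverts_def dss_edge_def dss_arc_def by auto presburger+

lemma dss_neighbours_left_leaf:
  "i < l \<Longrightarrow> {w \<in> {..<dss_nverts l m}. dss_edge l m w (3 + 2*i)} = {2 + 2*i}"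
  unfolding dss_nverts_def dss_edge_def dss_arc_def by auto presburger+

lemma dss_neighbours_right_middle:
  "j < m \<Longrightarrow> {w \<in> {..<dss_nverts l m}. dss_edge l m w (2 + 2*l + 2*j)} = {1, 3 + 2*l + 2*j}"
  unfolding dss_nverts_def dss_edge_def dss_arc_def by auto presburger+

lemma dss_neighbours_right_leaf:
  "j < m \<Longrightarrow> {w \<in> {..<dss_nverts l m}. dss_edge l m w (3 + 2*l + 2*j)} = {2 + 2*l + 2*j}"
  unfolding dss_nverts_def dss_edge_def dss_arc_def by auto presburger+

lemma dss_vertex_cases:
  assumes "x < dss_nverts l m"
  obtains "x = 0" | "x = 1"
    | i where "i < l" "x = 2 + 2*i" | i where "i < l" "x = 3 + 2*i"
    | j where "j < m" "x = 2 + 2*l + 2*j" | j where "j < m" "x = 3 + 2*l + 2*j"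
proof -
  consider "x < 2" | "2 \<le> x" "x < 2 + 2*l" | "2 + 2*l \<le> x" "x < 2 + 2*l + 2*m"
    using assms unfolding dss_nverts_def by linarith
  then show thesis
  proof cases
    case 2
    show thesis
    proof (cases "even x")
      case True
      with 2 have "(x - 2) div 2 < l" "x = 2 + 2*((x - 2) div 2)" by presburger+
      then show thesis by (rule that(3))
    next
      case False
      with 2 have "(x - 3) div 2 < l" "x = 3 + 2*((x - 3) div 2)" by presburger+
      then show thesis by (rule that(4))
    qed
  next
    case 3
    show thesis
    proof (cases "even x")
      case True
      with 3 have "(x - 2 - 2*l) div 2 < m" "x = 2 + 2*l + 2*((x - 2 - 2*l) div 2)" by presburger+
      then show thesis by (rule that(5))
    next
      case False
      with 3 have "(x - 3 - 2*l) div 2 < m" "x = 3 + 2*l + 2*((x - 3 - 2*l) div 2)" by presburger+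
      then show thesis by (rule that(6))
    qed
  qed (use that in linarith)
qed

text \<open>Solving the eigenvalue equations of \<open>T(l,m)\<close> from the leaves inwards gives
  \<open>dss_eigvec\<close>; the one remaining equation, at vertex 1, is \<open>dss_cubic l m (\<theta>\<^sup>2) = 0\<close>.\<close>

definition dss_cubic :: "nat \<Rightarrow> nat \<Rightarrow> real \<Rightarrow> real" where
  "dss_cubic l m u = u * (u - 1 - real l) * (u - 1 - real m) - (u - 1)\<^sup>2"

definition dss_eigvec :: "nat \<Rightarrow> real \<Rightarrow> nat \<Rightarrow> real" where
  "dss_eigvec l \<theta> w =
     (if w = 0 then (\<theta>\<^sup>2 - 1)\<^sup>2
      else if w = 1 then \<theta> * (\<theta>\<^sup>2 - 1 - real l) * (\<theta>\<^sup>2 - 1)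
      else if w < 2 + 2*l then (if even w then \<theta> * (\<theta>\<^sup>2 - 1) else \<theta>\<^sup>2 - 1)
      else if even w then \<theta>\<^sup>2 * (\<theta>\<^sup>2 - 1 - real l) else \<theta> * (\<theta>\<^sup>2 - 1 - real l))"

lemma dss_eigvec_left_eigenvector:
  assumes root: "dss_cubic l m (\<theta>\<^sup>2) = 0" and x: "x < dss_nverts l m"
  shows "(\<Sum>w<dss_nverts l m. complex_of_real (dss_eigvec l \<theta> w) * dss_adj l m $$ (w,x))
    = complex_of_real \<theta> * complex_of_real (dss_eigvec l \<theta> x)"
proof -
  let ?v = "dss_eigvec l \<theta>"
  have "(\<Sum>w<dss_nverts l m. complex_of_real (?v w) * dss_adj l m $$ (w,x))
      = complex_of_real (\<Sum>w<dss_nverts l m. if dss_edge l m w x then ?v w else 0)"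
    unfolding of_real_sum using x by (intro sum.cong) (auto simp: dss_adj_def)
  also have "(\<Sum>w<dss_nverts l m. if dss_edge l m w x then ?v w else 0)
      = sum ?v {w \<in> {..<dss_nverts l m}. dss_edge l m w x}"
    using sum.inter_filter[of "{..<dss_nverts l m}" ?v "\<lambda>w. dss_edge l m w x"] by simp
  also have "\<dots> = \<theta> * ?v x"
    using x
  proof (cases rule: dss_vertex_cases)
    case 1
    have "sum ?v (insert 1 ((\<lambda>i. 2 + 2*i) ` {..<l})) = ?v 1 + (\<Sum>i<l. ?v (2 + 2*i))"
      by (subst sum.insert) (auto simp: sum.reindex inj_on_def)
    also have "(\<Sum>i<l. ?v (2 + 2*i)) = (\<Sum>i<l. \<theta> * (\<theta>\<^sup>2 - 1))"
      by (intro sum.cong) (auto simp: dss_eigvec_def)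
    finally show ?thesis
      unfolding 1 dss_neighbours_0 by (simp add: dss_eigvec_def algebra_simps power2_eq_square)
  next
    case 2
    have "sum ?v (insert 0 ((\<lambda>j. 2 + 2*l + 2*j) ` {..<m})) = ?v 0 + (\<Sum>j<m. ?v (2 + 2*l + 2*j))"
      by (subst sum.insert) (auto simp: sum.reindex inj_on_def)
    also have "(\<Sum>j<m. ?v (2 + 2*l + 2*j)) = (\<Sum>j<m. \<theta>\<^sup>2 * (\<theta>\<^sup>2 - 1 - real l))"
      by (intro sum.cong) (auto simp: dss_eigvec_def)
    finally show ?thesis
      unfolding 2 dss_neighbours_1 using root
      by (simp add: dss_eigvec_def dss_cubic_def algebra_simps power2_eq_square)
  next
    case (3 i)
    then show ?thesis
      unfolding 3(2) dss_neighbours_left_middle[OF 3(1)]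
      by (simp add: dss_eigvec_def algebra_simps power2_eq_square)
  next
    case (4 i)
    then show ?thesis
      unfolding 4(2) dss_neighbours_left_leaf[OF 4(1)]
      by (simp add: dss_eigvec_def algebra_simps power2_eq_square)
  next
    case (5 j)
    then show ?thesis
      unfolding 5(2) dss_neighbours_right_middle[OF 5(1)]
      by (simp add: dss_eigvec_def algebra_simps power2_eq_square)
  next
    case (6 j)
    then show ?thesis
      unfolding 6(2) dss_neighbours_right_leaf[OF 6(1)]
      by (simp add: dss_eigvec_def algebra_simps power2_eq_square)
  qed
  finally show ?thesis by simp
qed

lemma dss_eigvec_nonzero:
  assumes "\<theta> \<noteq> 0" "\<theta>\<^sup>2 \<noteq> 1" "\<theta>\<^sup>2 \<noteq> 1 + real l"
  shows "dss_eigvec l \<theta> w \<noteq> 0"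
  using assms by (auto simp: dss_eigvec_def)

lemma dss_eigvec_uminus: "dss_eigvec l (-\<theta>) w = dss_eigvec l \<theta> w \<or> dss_eigvec l (-\<theta>) w = - dss_eigvec l \<theta> w"
  by (auto simp: dss_eigvec_def)

lemma dss_pst_cubic_root_square:
  fixes \<tau> u :: real
  assumes "a < dss_nverts l m" "b < dss_nverts l m" "\<tau> \<noteq> 0"
    and col: "\<And>w. w < dss_nverts l m \<Longrightarrow>
      transition_mat (dss_adj l m) \<tau> $$ (w,a) = (if w = b then \<gamma> else 0)"
    and root: "dss_cubic l m u = 0" "0 < u" "u \<noteq> 1" "u \<noteq> 1 + real l"
  shows "\<exists>k::int. u = of_int (k\<^sup>2) * (pi\<^sup>2 / (4 * \<tau>\<^sup>2))"
proof -
  define \<theta> where "\<theta> = sqrt u"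
  have \<theta>: "\<theta>\<^sup>2 = u" "(-\<theta>)\<^sup>2 = u" "\<theta> \<noteq> 0"
    using \<open>0 < u\<close> by (simp_all add: \<theta>_def)
  let ?v = "\<lambda>\<theta> w. complex_of_real (dss_eigvec l \<theta> w)"
  have "\<exists>k::int. 4 * \<tau> * \<theta> = 2 * pi * of_int k"
  proof (rule pst_eigenvalue_pair_period[OF dss_adj_carrier assms(1,2) col, where v = "?v \<theta>" and v' = "?v (-\<theta>)"])
    show "(\<Sum>w<dss_nverts l m. ?v \<theta> w * dss_adj l m $$ (w,x)) = complex_of_real \<theta> * ?v \<theta> x"
      if "x < dss_nverts l m" for x
      using dss_eigvec_left_eigenvector[OF _ that] \<theta> root by simp
    show "(\<Sum>w<dss_nverts l m. ?v (-\<theta>) w * dss_adj l m $$ (w,x)) = - complex_of_real \<theta> * ?v (-\<theta>) x"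
      if "x < dss_nverts l m" for x
      using dss_eigvec_left_eigenvector[OF _ that, of "-\<theta>"] \<theta> root by simp
    show "?v \<theta> a \<noteq> 0"
      using dss_eigvec_nonzero[of \<theta>] \<theta> root by simp
  qed (use dss_eigvec_uminus in auto)
  then obtain k :: int where "4 * \<tau> * \<theta> = 2 * pi * of_int k" ..
  then have "\<theta> = of_int k * pi / (2 * \<tau>)"
    using \<open>\<tau> \<noteq> 0\<close> by (simp add: field_simps)
  then have "u = of_int (k\<^sup>2) * (pi\<^sup>2 / (4 * \<tau>\<^sup>2))"
    using \<theta>(1) by (simp add: power_divide power_mult_distrib)
  then show ?thesis ..
qed

lemma dss_cubic_eq:
  "dss_cubic l m u = u^3 - (3 + real l + real m) * u\<^sup>2 + ((1 + real l) * (1 + real m) + 2) * u - 1"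
  unfolding dss_cubic_def by (simp add: algebra_simps power2_eq_square power3_eq_cube)

lemma dss_cubic_three_roots:
  assumes "l \<ge> 1" "m \<ge> 1"
  obtains u1 u2 u3 where "0 < u1" "u1 < 1" "1 < u2" "u2 < 1 + real l" "1 + real l < u3"
    "dss_cubic l m u1 = 0" "dss_cubic l m u2 = 0" "dss_cubic l m u3 = 0"
proof -
  have cont: "isCont (dss_cubic l m) x" for x
    unfolding dss_cubic_def by (intro continuous_intros)
  have at_0: "dss_cubic l m 0 < 0" by (simp add: dss_cubic_def)
  have at_1: "dss_cubic l m 1 > 0" using assms by (simp add: dss_cubic_def)
  have at_l: "dss_cubic l m (1 + real l) < 0" using assms by (simp add: dss_cubic_def)
  have at_S: "dss_cubic l m (3 + real l + real m) > 0"
  proof -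
    have nonneg: "0 \<le> real l * real l" "0 \<le> real m * real m" "0 \<le> real l * (real l * real m)"
      "0 \<le> real l * (real m * real m)" "0 \<le> real l * (real m * 5)" by auto
    have "(2 + real l + real m)\<^sup>2 < (3 + real l + real m) * ((2 + real m) * (2 + real l))"
      by (simp add: algebra_simps power2_eq_square) (use nonneg in linarith)
    then show ?thesis by (simp add: dss_cubic_def algebra_simps)
  qed
  obtain u1 where u1: "0 \<le> u1" "u1 \<le> 1" "dss_cubic l m u1 = 0"
    using IVT[of "dss_cubic l m" 0 0 1] at_0 at_1 cont by force
  obtain u2 where u2: "1 \<le> u2" "u2 \<le> 1 + real l" "dss_cubic l m u2 = 0"
    using IVT2[of "dss_cubic l m" "1 + real l" 0 1] at_1 at_l cont by force
  obtain u3 where u3: "1 + real l \<le> u3" "u3 \<le> 3 + real l + real m" "dss_cubic l m u3 = 0"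
    using IVT[of "dss_cubic l m" "1 + real l" 0 "3 + real l + real m"] at_l at_S cont by force
  have "u1 \<noteq> 0" "u1 \<noteq> 1" "u2 \<noteq> 1" "u2 \<noteq> 1 + real l" "u3 \<noteq> 1 + real l"
    using u1 u2 u3 at_0 at_1 at_l by auto
  with u1 u2 u3 show thesis
    by (intro that[of u1 u2 u3]) simp_all
qed

lemma dss_cubic_roots_sum:
  assumes "dss_cubic l m x = 0" "dss_cubic l m y = 0" "dss_cubic l m z = 0"
    and "x \<noteq> y" "x \<noteq> z" "y \<noteq> z"
  shows "x + y + z = 3 + real l + real m"
proof -
  define S where "S = 3 + real l + real m"
  define Q where "Q = (1 + real l) * (1 + real m) + 2"
  have diff: "dss_cubic l m s - dss_cubic l m t = (s - t) * (s\<^sup>2 + s*t + t\<^sup>2 - S*(s+t) + Q)" for s t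
    unfolding dss_cubic_eq S_def Q_def by (simp add: algebra_simps power2_eq_square power3_eq_cube)
  have "x\<^sup>2 + x*y + y\<^sup>2 - S*(x+y) + Q = 0" "x\<^sup>2 + x*z + z\<^sup>2 - S*(x+z) + Q = 0"
    using diff[of x y] diff[of x z] assms by simp_all
  then have "(y - z) * (x + y + z - S) = 0"
    by (simp add: algebra_simps power2_eq_square)
  then show ?thesis using \<open>y \<noteq> z\<close> unfolding S_def by simp
qed

lemma dss_cubic_no_rational_root_in_unit_interval:
  assumes "x \<in> \<rat>" "0 < x" "x < 1"
  shows "dss_cubic l m x \<noteq> 0"
proof
  assume root: "dss_cubic l m x = 0"
  obtain p d :: int where d: "d > 0" "coprime p d" "x = of_int p / of_int d"
    using Rats_cases'[OF \<open>x \<in> \<rat>\<close>] by blast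
  define S :: int where "S = 3 + int l + int m"
  define Q :: int where "Q = (1 + int l) * (1 + int m) + 2"
  have xd: "x * real_of_int d = real_of_int p" using d(1,3) by simp
  have "real_of_int d ^ 3 * dss_cubic l m x = (x * real_of_int d)^3 - real_of_int S * (x * real_of_int d)^2 * real_of_int d
          + real_of_int Q * (x * real_of_int d) * real_of_int d^2 - real_of_int d ^ 3"
    unfolding dss_cubic_eq S_def Q_def by (simp add: algebra_simps power2_eq_square power3_eq_cube)
  then have "real_of_int (p^3 - S * p^2 * d + Q * p * d^2 - d^3) = 0"
    unfolding xd using root by simp
  then have "p^3 = d * (S * p^2 - Q * p * d + d^2)"
    by (simp only: of_int_eq_0_iff) (simp add: algebra_simps power2_eq_square power3_eq_cube)
  then have "d dvd p^3" by simp
  moreover have "coprime (p^3) d" using d(2) by simp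
  ultimately have "d = 1"
    using \<open>d > 0\<close> coprime_common_divisor_int[of "p^3" d d] by simp
  then show False
    using d(3) \<open>0 < x\<close> \<open>x < 1\<close> by simp
qed

lemma rational_of_integer_multiples:
  fixes x y z R :: real and p q r :: int
  assumes "x = of_int p * R" "y = of_int q * R" "z = of_int r * R"
    and "x + y + z \<in> \<rat>" "x + y + z \<noteq> 0"
  shows "x \<in> \<rat>"
proof -
  have sum: "x + y + z = of_int (p + q + r) * R"
    using assms(1-3) by (simp add: algebra_simps)
  then have "of_int (p + q + r) \<noteq> (0::real)"
    using assms(5) by auto
  then have "x = of_int p * (of_int (p + q + r) * R) / of_int (p + q + r)"
    using assms(1) by simp
  then have "x = of_int p * (x + y + z) / of_int (p + q + r)"
    unfolding sum .
  also have "\<dots> \<in> \<rat>"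
    using assms(4) by (intro Rats_divide Rats_mult Rats_of_int)
  finally show ?thesis .
qed

theorem theorem3p1:
  fixes l m :: nat
  assumes "l \<ge> 1" and "m \<ge> 1"
  shows "\<forall>a b. a \<noteq> b \<longrightarrow> \<not> has_pst (dss_adj l m) a b"
proof (intro allI impI notI)
  fix a b assume pst: "has_pst (dss_adj l m) a b"
  then have ab: "a < dss_nverts l m" "b < dss_nverts l m"
    by (auto simp: has_pst_def dss_adj_def)
  obtain \<tau> \<gamma> where "\<tau> \<noteq> 0"
    and col: "\<And>w. w < dss_nverts l m \<Longrightarrow> transition_mat (dss_adj l m) \<tau> $$ (w,a) = (if w = b then \<gamma> else 0)"
    using has_pst_column[OF pst dss_adj_carrier] by blast
  obtain u1 u2 u3 where u: "0 < u1" "u1 < 1" "1 < u2" "u2 < 1 + real l" "1 + real l < u3"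
    and roots: "dss_cubic l m u1 = 0" "dss_cubic l m u2 = 0" "dss_cubic l m u3 = 0"
    using dss_cubic_three_roots[OF assms] by blast
  define R where "R = pi\<^sup>2 / (4 * \<tau>\<^sup>2)"
  have square: "\<exists>k::int. u = of_int (k\<^sup>2) * R"
    if "dss_cubic l m u = 0" "0 < u" "u \<noteq> 1" "u \<noteq> 1 + real l" for u
    using dss_pst_cubic_root_square[OF ab \<open>\<tau> \<noteq> 0\<close> col that] unfolding R_def .
  obtain k1 :: int where k1: "u1 = of_int (k1\<^sup>2) * R"
    using square[OF roots(1)] u by auto
  obtain k2 :: int where k2: "u2 = of_int (k2\<^sup>2) * R"
    using square[OF roots(2)] u by auto
  obtain k3 :: int where k3: "u3 = of_int (k3\<^sup>2) * R"
    using square[OF roots(3)] u by auto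
  have sum: "u1 + u2 + u3 = 3 + real l + real m"
    using dss_cubic_roots_sum[OF roots] u by simp
  have "u1 \<in> \<rat>"
    by (rule rational_of_integer_multiples[OF k1 k2 k3]) (simp_all add: sum Rats_add)
  then show False
    using dss_cubic_no_rational_root_in_unit_interval u roots by blast
qed

end
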